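(* Let $V$ be a vector space over a field $\mathbb{K}$, $F$ a bilinear form on $V$, $Q=Q_F$ (i.e. $Q(x)=F(x,x)$), and let $F'=F+A$ with $A$ an alternating bilinear form on $V$ (so $Q_{F'}=Q$). Let $\rho_F,\rho_{F'}:\mathrm{Cl}(V,Q)\to\mathrm{End}(\bigwedge(V))$ be the representations $\rho_F=\bar\Lambda_F$, $\rho_{F'}=\bar\Lambda_{F'}$. Then these representations are equivalent; namely $$\rho_{F'}(a)=\bar\lambda_A\circ\rho_F(a)\circ\bar\lambda_A^{-1}\quad\text{for all }a\in\mathrm{Cl}(V,Q).$$
   Context: $\mathrm{Cl}(V,Q)=\mathcal{T}(V)/I(Q)$ where $I(Q)$ is the two-sided ideal of the tensor algebra generated by $x\otimes x-Q(x)1$; $\bigwedge(V)=\mathrm{Cl}(V,0)$ is the exterior algebra. For $f\in V^*$, $\bar{i}_f$ is the unique linear map on $\bigwedge(V)$ with $\bar{i}_f(1)=0$ and $\bar{i}_f(x\wedge w)=f(x)w-x\wedge\bar{i}_f(w)$ ($x\in V$); for a bilinear form $G$, $\bar{i}_x^G:=\bar{i}_{g_x}$ with $g_x(y)=G(x,y)$. For $x\in V$ the operator $\bar e_x+\bar{i}_x^G$ on $\bigwedge(V)$ (with $\bar e_x(w)=x\wedge w$) squares to $G(x,x)$, so $x\mapsto \bar e_x+\bar i_x^G$ extends uniquely to an algebra homomorphism $\bar\Lambda_G:\mathrm{Cl}(V,Q_G)\to\mathrm{End}(\bigwedge(V))$, where $Q_G(x)=G(x,x)$. For an alternating form $A$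 (so $Q_A=0$), $\bar\lambda_A:\bigwedge(V)\to\bigwedge(V)$ is $\bar\lambda_A(u)=\bar\Lambda_A(u)(1)$; it is a linear bijection with inverse $\bar\lambda_{-A}$. *)

theory Defs
  imports Complex_Main
begin

text \<open>The vector space V is the whole type 'v with scalar
multiplication scale over the field 'k.  The free associative algebra on the set V
is modelled by finitely supported coefficient functions on words ('v list).
The tensor algebra T(V) and Cl(V,Q) = T(V)/I(Q) are obtained together as the
quotient of the free algebra by the two-sided ideal generated by the multilinearity
relations (giving T(V)) and by x*x - Q(x) 1.  Elements of Cl(V,Q) are
equivalence classes (sets of representatives).\<close>

type_synonym ('v,'k) fa = "'v list \<Rightarrow> 'k"

definition FA :: "('v,'k::field) fa set" where
  "FA = {p. finite {w. p w \<noteq> 0}}"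

definition word :: "'v list \<Rightarrow> ('v,'k::field) fa" where
  "word w = (\<lambda>u. if u = w then 1 else 0)"

definition fadd :: "('v,'k::field) fa \<Rightarrow> ('v,'k) fa \<Rightarrow> ('v,'k) fa" where
  "fadd p q = (\<lambda>w. p w + q w)"

definition fsub :: "('v,'k::field) fa \<Rightarrow> ('v,'k) fa \<Rightarrow> ('v,'k) fa" where
  "fsub p q = (\<lambda>w. p w - q w)"

definition fsmult :: "'k::field \<Rightarrow> ('v,'k) fa \<Rightarrow> ('v,'k) fa" where
  "fsmult c p = (\<lambda>w. c * p w)"

definition fmul :: "('v,'k::field) fa \<Rightarrow> ('v,'k) fa \<Rightarrow> ('v,'k) fa" where
  "fmul p q = (\<lambda>w. \<Sum>i\<le>length w. p (take i w) * q (drop i w))"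

definition iota :: "'v \<Rightarrow> ('v,'k::field) fa" where
  "iota x = word [x]"

definition cl_gens :: "('k::field \<Rightarrow> 'v::ab_group_add \<Rightarrow> 'v) \<Rightarrow> ('v \<Rightarrow> 'k) \<Rightarrow> ('v,'k) fa set" where
  "cl_gens scale Q =
     {fsub (fsub (iota (x + y)) (iota x)) (iota y) | x y. True}
   \<union> {fsub (iota (scale c x)) (fsmult c (iota x)) | c x. True}
   \<union> {fsub (fmul (iota x) (iota x)) (fsmult (Q x) (word [])) | x. True}"

inductive_set cl_ideal :: "('k::field \<Rightarrow> 'v::ab_group_add \<Rightarrow> 'v) \<Rightarrow> ('v \<Rightarrow> 'k) \<Rightarrow> ('v,'k) fa set"
  for scale Q where
  zero: "(\<lambda>_. 0) \<in> cl_ideal scale Q"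
| add: "p \<in> cl_ideal scale Q \<Longrightarrow> q \<in> cl_ideal scale Q \<Longrightarrow> fadd p q \<in> cl_ideal scale Q"
| smult: "p \<in> cl_ideal scale Q \<Longrightarrow> fsmult c p \<in> cl_ideal scale Q"
| gen: "r \<in> cl_gens scale Q \<Longrightarrow> fmul (fmul (word u) r) (word v) \<in> cl_ideal scale Q"

definition cl_rel :: "('k::field \<Rightarrow> 'v::ab_group_add \<Rightarrow> 'v) \<Rightarrow> ('v \<Rightarrow> 'k) \<Rightarrow> (('v,'k) fa \<times> ('v,'k) fa) set" where
  "cl_rel scale Q = {(p, q). p \<in> FA \<and> q \<in> FA \<and> fsub p q \<in> cl_ideal scale Q}"

definition Cl :: "('k::field \<Rightarrow> 'v::ab_group_add \<Rightarrow> 'v) \<Rightarrow> ('v \<Rightarrow> 'k) \<Rightarrow> ('v,'k) fa set set" where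
  "Cl scale Q = FA // cl_rel scale Q"

definition cls :: "('k::field \<Rightarrow> 'v::ab_group_add \<Rightarrow> 'v) \<Rightarrow> ('v \<Rightarrow> 'k) \<Rightarrow> ('v,'k) fa \<Rightarrow> ('v,'k) fa set" where
  "cls scale Q p = cl_rel scale Q `` {p}"

definition Ext :: "('k::field \<Rightarrow> 'v::ab_group_add \<Rightarrow> 'v) \<Rightarrow> ('v,'k) fa set set" where
  "Ext scale = Cl scale (\<lambda>_. 0)"

definition lin_ext :: "('v list \<Rightarrow> ('v,'k::field) fa) \<Rightarrow> ('v,'k) fa \<Rightarrow> ('v,'k) fa" where
  "lin_ext g p = (\<lambda>u. \<Sum>w\<in>{w. p w \<noteq> 0}. p w * g w u)"

primrec iw :: "('v \<Rightarrow> 'k::field) \<Rightarrow> 'v list \<Rightarrow> ('v,'k) fa" where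
  "iw f [] = (\<lambda>_. 0)"
| "iw f (x # w) = fsub (fsmult (f x) (word w)) (fmul (iota x) (iw f w))"

definition ifree :: "('v \<Rightarrow> 'k::field) \<Rightarrow> ('v,'k) fa \<Rightarrow> ('v,'k) fa" where
  "ifree f = lin_ext (iw f)"

definition efree :: "'v \<Rightarrow> ('v,'k::field) fa \<Rightarrow> ('v,'k) fa" where
  "efree x p = fmul (iota x) p"

definition opv :: "('v \<Rightarrow> 'v \<Rightarrow> 'k::field) \<Rightarrow> 'v \<Rightarrow> ('v,'k) fa \<Rightarrow> ('v,'k) fa" where
  "opv G x p = fadd (efree x p) (ifree (G x) p)"

primrec opword :: "('v \<Rightarrow> 'v \<Rightarrow> 'k::field) \<Rightarrow> 'v list \<Rightarrow> ('v,'k) fa \<Rightarrow> ('v,'k) fa" where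
  "opword G [] = id"
| "opword G (x # w) = opv G x \<circ> opword G w"

definition rhofree :: "('v \<Rightarrow> 'v \<Rightarrow> 'k::field) \<Rightarrow> ('v,'k) fa \<Rightarrow> ('v,'k) fa \<Rightarrow> ('v,'k) fa" where
  "rhofree G t p = lin_ext (\<lambda>w. opword G w p) t"

definition Lambda_bar :: "('k::field \<Rightarrow> 'v::ab_group_add \<Rightarrow> 'v) \<Rightarrow> ('v \<Rightarrow> 'v \<Rightarrow> 'k) \<Rightarrow> ('v,'k) fa set
    \<Rightarrow> ('v,'k) fa set \<Rightarrow> ('v,'k) fa set" where
  "Lambda_bar scale G a W = cls scale (\<lambda>_. 0) (rhofree G (SOME t. t \<in> a) (SOME p. p \<in> W))"

definition lambda_bar :: "('k::field \<Rightarrow> 'v::ab_group_add \<Rightarrow> 'v) \<Rightarrow> ('v \<Rightarrow> 'v \<Rightarrow> 'k) \<Rightarrow> ('v,'k) fa set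
    \<Rightarrow> ('v,'k) fa set" where
  "lambda_bar scale A u = Lambda_bar scale A u (cls scale (\<lambda>_. 0) (word []))"

definition bilinear_form :: "('k::field \<Rightarrow> 'v::ab_group_add \<Rightarrow> 'v) \<Rightarrow> ('v \<Rightarrow> 'v \<Rightarrow> 'k) \<Rightarrow> bool" where
  "bilinear_form scale B \<longleftrightarrow>
     (\<forall>x y z. B (x + y) z = B x z + B y z) \<and>
     (\<forall>x y z. B x (y + z) = B x y + B x z) \<and>
     (\<forall>c x y. B (scale c x) y = c * B x y) \<and>
     (\<forall>c x y. B x (scale c y) = c * B x y)"

definition alternating_form :: "('k::field \<Rightarrow> 'v::ab_group_add \<Rightarrow> 'v) \<Rightarrow> ('v \<Rightarrow> 'v \<Rightarrow> 'k) \<Rightarrow> bool" where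
  "alternating_form scale A \<longleftrightarrow> bilinear_form scale A \<and> (\<forall>x. A x x = 0)"

end

theory Submission
  imports Defs "HOL-Library.Function_Algebras"
begin

text \<open>Everything is computed on representatives in the free algebra, writing
  \<open>\<lambda>\<^sub>A u = \<rho>\<^sub>A(u)(1)\<close>.  Interior products anticommute with each other, and \<open>i\<^sub>f\<close>
  anticommutes with \<open>e\<^sub>x\<close> up to \<open>f(x)\<close>; hence \<open>i\<^sub>f \<circ> \<lambda>\<^sub>A = \<lambda>\<^sub>A \<circ> i\<^sub>f\<close>, while
  \<open>(e\<^sub>x + i\<^sup>A\<^sub>x) \<circ> \<lambda>\<^sub>A = \<lambda>\<^sub>A \<circ> e\<^sub>x\<close> by definition of \<open>\<lambda>\<^sub>A\<close>.  Adding \<open>i\<^sup>F\<^sub>x\<close> gives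
  \<open>\<rho>\<^sub>F\<^sub>+\<^sub>A(x) \<circ> \<lambda>\<^sub>A = \<lambda>\<^sub>A \<circ> \<rho>\<^sub>F(x)\<close> on generators, hence for all tensors.  Taking
  \<open>F = -A\<close> and using \<open>\<rho>\<^sub>0(t)(1) = t\<close> shows that \<open>\<lambda>\<^sub>A \<circ> \<lambda>\<^sub>-\<^sub>A = id\<close>.  To pass to
  classes it suffices that \<open>\<rho>\<^sub>G(t)\<close> preserves the ideal \<open>I(0)\<close> of the exterior algebra
  and that \<open>\<lambda>\<^sub>A\<close> vanishes on \<open>I(0)\<close>; the latter holds because \<open>A\<close> is alternating,
  so that \<open>(e\<^sub>x + i\<^sup>A\<^sub>x)\<^sup>2 = e\<^sub>x\<^sup>2\<close>.\<close>

declare plus_fun_apply[simp del] minus_apply[simp del] uminus_apply[simp del] zero_fun_apply[simp del]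

section \<open>Arithmetic of the free algebra\<close>

lemma fsmult_apply: "fsmult c p w = c * p w"
  by (simp add: fsmult_def)

lemmas fa_simps = plus_fun_apply minus_apply uminus_apply zero_fun_apply fsmult_apply

lemma fadd_eq_plus: "fadd p q = p + q"
  by (simp add: fadd_def fun_eq_iff fa_simps)

lemma fsub_eq_minus: "fsub p q = p - q"
  by (simp add: fsub_def fun_eq_iff fa_simps)

lemma const_zero_eq_zero[simp]: "(\<lambda>_. 0) = 0"
  by (simp add: fun_eq_iff fa_simps)

lemma fsmult_add[simp]: "fsmult c (p + q) = fsmult c p + fsmult c q"
  by (simp add: fun_eq_iff fa_simps algebra_simps)

lemma fsmult_diff[simp]: "fsmult c (p - q) = fsmult c p - fsmult c q"
  by (simp add: fun_eq_iff fa_simps algebra_simps)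

lemma fsmult_zero_one[simp]: "fsmult c 0 = 0" "fsmult 0 p = 0" "fsmult 1 p = p"
  by (simp_all add: fun_eq_iff fa_simps)

lemma fsmult_fsmult[simp]: "fsmult c (fsmult d p) = fsmult (c * d) p"
  by (simp add: fun_eq_iff fa_simps)

lemma fsmult_minus_one: "fsmult (-1) p = - p"
  by (simp add: fun_eq_iff fa_simps)

lemma fsmult_add_left: "fsmult (c + d) p = fsmult c p + fsmult d p"
  by (simp add: fun_eq_iff fa_simps algebra_simps)

lemma FA_zero[simp]: "0 \<in> FA"
  by (simp add: FA_def fa_simps)

lemma FA_word[simp]: "word w \<in> FA"
proof -
  have "{u. word w u \<noteq> 0} \<subseteq> {w}"
    by (auto simp: word_def)
  then show ?thesis
    unfolding FA_def by (auto intro: finite_subset)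
qed

lemma FA_add[simp]:
  assumes "p \<in> FA" "q \<in> FA"
  shows "p + q \<in> FA"
proof -
  have "{w. (p + q) w \<noteq> 0} \<subseteq> {w. p w \<noteq> 0} \<union> {w. q w \<noteq> 0}"
    by (auto simp: fa_simps)
  with assms show ?thesis
    unfolding FA_def by (auto intro: finite_subset)
qed

lemma FA_smult[simp]:
  assumes "p \<in> FA"
  shows "fsmult c p \<in> FA"
proof -
  have "{w. fsmult c p w \<noteq> 0} \<subseteq> {w. p w \<noteq> 0}"
    by (auto simp: fa_simps)
  with assms show ?thesis
    unfolding FA_def by (auto intro: finite_subset)
qed

lemma FA_uminus[simp]: "p \<in> FA \<Longrightarrow> - p \<in> FA"
  using FA_smult[of p "-1"] by (simp add: fsmult_minus_one)

lemma FA_diff[simp]: "p \<in> FA \<Longrightarrow> q \<in> FA \<Longrightarrow> p - q \<in> FA"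
  using FA_add[of p "- q"] by simp

lemma FA_induct[consumes 1, case_names zero add_word]:
  assumes "p \<in> FA"
    and "P 0"
    and "\<And>p w c. p \<in> FA \<Longrightarrow> P p \<Longrightarrow> P (p + fsmult c (word w))"
  shows "P p"
proof -
  have "P p" if "finite S" "{w. p w \<noteq> 0} \<subseteq> S" for S p
    using that
  proof (induction S arbitrary: p)
    case empty
    then have "p = 0"
      by (auto simp: fun_eq_iff fa_simps)
    with assms(2) show ?case
      by simp
  next
    case (insert w S p)
    define p' where "p' = p(w := 0)"
    have supp: "{u. p' u \<noteq> 0} \<subseteq> S"
      using insert.prems by (auto simp: p'_def)
    then have "p' \<in> FA"
      using insert.hyps unfolding FA_def by (auto intro: finite_subset)
    moreover have "p = p' + fsmult (p w) (word w)"
      by (simp add: fun_eq_iff fa_simps p'_def word_def)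
    ultimately show ?case
      using assms(3) insert.IH[OF supp] by metis
  qed
  with assms(1) show ?thesis
    unfolding FA_def by blast
qed

lemma fmul_word_left:
  "fmul (word u) p w = (if take (length u) w = u then p (drop (length u) w) else 0)"
proof -
  have "fmul (word u) p w = (\<Sum>i\<le>length w. if i = length u \<and> take (length u) w = u
                                              then p (drop (length u) w) else 0)"
    unfolding fmul_def by (rule sum.cong) (auto simp: word_def)
  also have "\<dots> = (if take (length u) w = u then p (drop (length u) w) else 0)"
  proof (cases "take (length u) w = u")
    case True
    then have "length u \<le> length w"
      by (metis length_take min.cobounded1)
    with True show ?thesis
      by (simp add: sum.delta)
  qed simp
  finally show ?thesis .
qed

lemma fmul_word_word: "fmul (word u) (word v) = word (u @ v)"
proof (rule ext)
  fix w
  have "(take (length u) w = u \<and> drop (length u) w = v) \<longleftrightarrow> w = u @ v"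
    using append_eq_conv_conj[of u v w] by auto
  then show "fmul (word u) (word v) w = word (u @ v) w"
    unfolding fmul_word_left by (auto simp: word_def)
qed

lemma fmul_diff_left: "fmul (p - q) r = fmul p r - fmul q r"
  by (simp add: fmul_def fun_eq_iff fa_simps algebra_simps sum_subtractf)

lemma fmul_smult_left: "fmul (fsmult c p) r = fsmult c (fmul p r)"
  by (simp add: fmul_def fun_eq_iff fa_simps algebra_simps sum_distrib_left)

lemma fmul_add_right: "fmul r (p + q) = fmul r p + fmul r q"
  by (simp add: fmul_def fun_eq_iff fa_simps algebra_simps sum.distrib)

lemma fmul_diff_right: "fmul r (p - q) = fmul r p - fmul r q"
  by (simp add: fmul_def fun_eq_iff fa_simps algebra_simps sum_subtractf)

lemma fmul_smult_right: "fmul r (fsmult c p) = fsmult c (fmul r p)"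
  by (simp add: fmul_def fun_eq_iff fa_simps algebra_simps sum_distrib_left)

lemma fmul_zero_right: "fmul r 0 = 0"
  by (simp add: fmul_def fun_eq_iff fa_simps)

lemma efree_add[simp]: "efree x (p + q) = efree x p + efree x q"
  by (simp add: efree_def fmul_add_right)

lemma efree_diff[simp]: "efree x (p - q) = efree x p - efree x q"
  by (simp add: efree_def fmul_diff_right)

lemma efree_smult[simp]: "efree x (fsmult c p) = fsmult c (efree x p)"
  by (simp add: efree_def fmul_smult_right)

lemma efree_zero[simp]: "efree x 0 = 0"
  by (simp add: efree_def fmul_zero_right)

lemma efree_word[simp]: "efree x (word w) = word (x # w)"
  by (simp add: efree_def iota_def fmul_word_word)

lemma FA_efree[simp]: "p \<in> FA \<Longrightarrow> efree x p \<in> FA"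
  by (induction rule: FA_induct) simp_all

lemma lin_ext_superset:
  assumes "finite S" "{w. p w \<noteq> 0} \<subseteq> S"
  shows "lin_ext g p u = (\<Sum>w\<in>S. p w * g w u)"
  unfolding lin_ext_def using assms by (intro sum.mono_neutral_left) (auto simp: fa_simps)

lemma lin_ext_add:
  assumes "p \<in> FA" "q \<in> FA"
  shows "lin_ext g (p + q) = lin_ext g p + lin_ext g q"
proof (rule ext)
  fix u
  let ?S = "{w. p w \<noteq> 0} \<union> {w. q w \<noteq> 0}"
  have S: "finite ?S"
    using assms by (simp add: FA_def)
  have "lin_ext g (p + q) u = (\<Sum>w\<in>?S. (p + q) w * g w u)"
    by (rule lin_ext_superset[OF S]) (auto simp: fa_simps)
  also have "\<dots> = (\<Sum>w\<in>?S. p w * g w u) + (\<Sum>w\<in>?S. q w * g w u)"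
    by (simp add: fa_simps algebra_simps sum.distrib)
  also have "\<dots> = (lin_ext g p + lin_ext g q) u"
    using lin_ext_superset[OF S, of p g u] lin_ext_superset[OF S, of q g u]
    by (auto simp: fa_simps)
  finally show "lin_ext g (p + q) u = (lin_ext g p + lin_ext g q) u" .
qed

lemma lin_ext_smult: "lin_ext g (fsmult c p) = fsmult c (lin_ext g p)"
proof (cases "c = 0")
  case False
  then have "{w. fsmult c p w \<noteq> 0} = {w. p w \<noteq> 0}"
    by (simp add: fa_simps)
  then show ?thesis
    by (simp add: lin_ext_def fun_eq_iff fa_simps sum_distrib_left mult.assoc)
qed (simp add: lin_ext_def fun_eq_iff fa_simps)

lemma lin_ext_zero[simp]: "lin_ext g 0 = 0"
  by (simp add: lin_ext_def fun_eq_iff fa_simps)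

lemma lin_ext_word[simp]: "lin_ext g (word w) = g w"
proof -
  have "{u. word w u \<noteq> 0} = {w}"
    by (auto simp: word_def)
  then show ?thesis
    by (simp add: lin_ext_def fun_eq_iff word_def)
qed

lemma lin_ext_add_fun: "lin_ext (\<lambda>w. g w + h w) p = lin_ext g p + lin_ext h p"
  by (simp add: lin_ext_def fun_eq_iff fa_simps algebra_simps sum.distrib)

lemma lin_ext_smult_fun: "lin_ext (\<lambda>w. fsmult c (g w)) p = fsmult c (lin_ext g p)"
  by (simp add: lin_ext_def fun_eq_iff fa_simps algebra_simps sum_distrib_left)

lemma FA_lin_ext:
  assumes "p \<in> FA" "\<And>w. g w \<in> FA"
  shows "lin_ext g p \<in> FA"
  using assms(1) by (induction rule: FA_induct) (simp_all add: lin_ext_add lin_ext_smult assms(2))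

definition fa_linear :: "(('v,'k::field) fa \<Rightarrow> ('v,'k) fa) \<Rightarrow> bool" where
  "fa_linear T \<longleftrightarrow> (\<forall>p\<in>FA. \<forall>q\<in>FA. T (p + q) = T p + T q) \<and>
                    (\<forall>c. \<forall>p\<in>FA. T (fsmult c p) = fsmult c (T p))"

lemma fa_linearD:
  "fa_linear T \<Longrightarrow> p \<in> FA \<Longrightarrow> q \<in> FA \<Longrightarrow> T (p + q) = T p + T q"
  "fa_linear T \<Longrightarrow> p \<in> FA \<Longrightarrow> T (fsmult c p) = fsmult c (T p)"
  by (auto simp: fa_linear_def)

lemma fa_linear_zero: "fa_linear T \<Longrightarrow> T 0 = 0"
  using fa_linearD(2)[of T 0 0] by simp

lemma fa_linear_diff:
  assumes "fa_linear T" "p \<in> FA" "q \<in> FA"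
  shows "T (p - q) = T p - T q"
proof -
  have "T (p - q) = T (p + fsmult (-1) q)"
    by (simp add: fsmult_minus_one)
  also have "\<dots> = T p + fsmult (-1) (T q)"
    using assms by (simp add: fa_linearD)
  finally show ?thesis
    by (simp add: fsmult_minus_one)
qed

lemma fa_linear_eq_lin_ext:
  assumes "fa_linear T" "p \<in> FA"
  shows "T p = lin_ext (\<lambda>w. T (word w)) p"
  using assms(2)
  by (induction rule: FA_induct)
     (simp_all add: fa_linear_zero[OF assms(1)] fa_linearD[OF assms(1)] lin_ext_add lin_ext_smult)

lemma fa_linear_eqI:
  assumes "fa_linear T" "fa_linear S" "\<And>w. T (word w) = S (word w)" "p \<in> FA"
  shows "T p = S p"
  using fa_linear_eq_lin_ext[OF assms(1,4)] fa_linear_eq_lin_ext[OF assms(2,4)] assms(3) by simp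

lemma fa_linear_lin_ext: "fa_linear (lin_ext g)"
  by (simp add: fa_linear_def lin_ext_add lin_ext_smult)

lemma fa_linear_id: "fa_linear (\<lambda>p. p)"
  by (simp add: fa_linear_def)

lemma fa_linear_zero_op: "fa_linear (\<lambda>p. 0)"
  by (simp add: fa_linear_def fa_simps)

lemma fa_linear_comp:
  "fa_linear T \<Longrightarrow> fa_linear S \<Longrightarrow> S ` FA \<subseteq> FA \<Longrightarrow> fa_linear (\<lambda>p. T (S p))"
  by (simp add: fa_linear_def image_subset_iff)

lemma fa_linear_add: "fa_linear T \<Longrightarrow> fa_linear S \<Longrightarrow> fa_linear (\<lambda>p. T p + S p)"
  by (simp add: fa_linear_def)

lemma fa_linear_minus: "fa_linear T \<Longrightarrow> fa_linear S \<Longrightarrow> fa_linear (\<lambda>p. T p - S p)"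
  by (simp add: fa_linear_def)

lemma fa_linear_smult: "fa_linear T \<Longrightarrow> fa_linear (\<lambda>p. fsmult c (T p))"
  by (simp add: fa_linear_def mult.commute)

lemma fa_linear_efree: "fa_linear (efree x)"
  by (simp add: fa_linear_def)

section \<open>Interior products\<close>

lemma iw_Nil_eq[simp]: "iw f [] = 0"
  by simp

lemma iw_Cons_eq[simp]: "iw f (x # w) = fsmult (f x) (word w) - efree x (iw f w)"
  by (simp add: fsub_eq_minus efree_def)

declare iw.simps[simp del]

lemma FA_iw[simp]: "iw f w \<in> FA"
  by (induction w) simp_all

lemma fa_linear_ifree: "fa_linear (ifree f)"
  by (simp add: ifree_def fa_linear_lin_ext)

lemma FA_ifree[simp]: "p \<in> FA \<Longrightarrow> ifree f p \<in> FA"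
  by (simp add: ifree_def FA_lin_ext)

lemma ifree_word[simp]: "ifree f (word w) = iw f w"
  by (simp add: ifree_def)

lemma ifree_zero[simp]: "ifree f 0 = 0"
  by (simp add: ifree_def)

lemma ifree_add: "p \<in> FA \<Longrightarrow> q \<in> FA \<Longrightarrow> ifree f (p + q) = ifree f p + ifree f q"
  by (rule fa_linearD(1)[OF fa_linear_ifree])

lemma ifree_diff: "p \<in> FA \<Longrightarrow> q \<in> FA \<Longrightarrow> ifree f (p - q) = ifree f p - ifree f q"
  by (rule fa_linear_diff[OF fa_linear_ifree])

lemma ifree_smult: "p \<in> FA \<Longrightarrow> ifree f (fsmult c p) = fsmult c (ifree f p)"
  by (rule fa_linearD(2)[OF fa_linear_ifree])

lemma ifree_efree:
  assumes "p \<in> FA"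
  shows "ifree f (efree x p) = fsmult (f x) p - efree x (ifree f p)"
proof (rule fa_linear_eqI[OF _ _ _ assms])
  show "fa_linear (\<lambda>p. ifree f (efree x p))"
    by (rule fa_linear_comp[OF fa_linear_ifree fa_linear_efree]) auto
  show "fa_linear (\<lambda>p. fsmult (f x) p - efree x (ifree f p))"
    by (intro fa_linear_minus fa_linear_smult[OF fa_linear_id]
        fa_linear_comp[OF fa_linear_efree fa_linear_ifree]) auto
qed simp

lemma ifree_anticommute:
  assumes "p \<in> FA"
  shows "ifree f (ifree g p) = - ifree g (ifree f p)"
proof -
  have "ifree f (ifree g p) + ifree g (ifree f p) = 0"
  proof (rule fa_linear_eqI[OF _ fa_linear_zero_op _ assms])
    show "fa_linear (\<lambda>p. ifree f (ifree g p) + ifree g (ifree f p))"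
      by (intro fa_linear_add fa_linear_comp[OF fa_linear_ifree fa_linear_ifree]) auto
    show "ifree f (ifree g (word w)) + ifree g (ifree f (word w)) = 0" for w
    proof (induction w)
      case (Cons x w)
      have "ifree f (iw g (x # w)) + ifree g (iw f (x # w))
          = efree x (ifree f (iw g w) + ifree g (iw f w))"
        by (simp add: ifree_diff ifree_smult ifree_efree algebra_simps)
      with Cons show ?case
        by simp
    qed simp
  qed
  then show ?thesis
    by (simp add: eq_neg_iff_add_eq_0)
qed

text \<open>In characteristic 2 this does not follow from \<open>ifree_anticommute\<close> with \<open>f = g\<close>.\<close>

lemma ifree_ifree:
  assumes "p \<in> FA"
  shows "ifree f (ifree f p) = 0"
proof (rule fa_linear_eqI[OF _ fa_linear_zero_op _ assms])
  show "fa_linear (\<lambda>p. ifree f (ifree f p))"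
    by (rule fa_linear_comp[OF fa_linear_ifree fa_linear_ifree]) auto
  show "ifree f (ifree f (word w)) = 0" for w
    by (induction w) (simp_all add: ifree_diff ifree_smult ifree_efree)
qed

lemma ifree_add_fun: "ifree (\<lambda>y. f y + g y) p = ifree f p + ifree g p"
proof -
  have "iw (\<lambda>y. f y + g y) w = iw f w + iw g w" for w
    by (induction w) (simp_all add: fsmult_add_left algebra_simps)
  then have "iw (\<lambda>y. f y + g y) = (\<lambda>w. iw f w + iw g w)"
    by blast
  then show ?thesis
    by (simp add: ifree_def lin_ext_add_fun)
qed

lemma ifree_smult_fun: "ifree (\<lambda>y. c * f y) p = fsmult c (ifree f p)"
proof -
  have "iw (\<lambda>y. c * f y) w = fsmult c (iw f w)" for w
    by (induction w) simp_all
  then have "iw (\<lambda>y. c * f y) = (\<lambda>w. fsmult c (iw f w))"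
    by blast
  then show ?thesis
    by (simp add: ifree_def lin_ext_smult_fun)
qed

lemma iw_zero[simp]: "iw 0 w = 0"
  by (induction w) (simp_all add: fa_simps)

section \<open>The operators \<open>\<rho>\<^sub>G\<close> on representatives\<close>

abbreviation lambda_free :: "('v \<Rightarrow> 'v \<Rightarrow> 'k::field) \<Rightarrow> ('v,'k) fa \<Rightarrow> ('v,'k) fa" where
  "lambda_free A u \<equiv> rhofree A u (word [])"

lemma opv_eq: "opv G x p = efree x p + ifree (G x) p"
  by (simp add: opv_def fadd_eq_plus)

lemma fa_linear_opv: "fa_linear (opv G x)"
  unfolding opv_eq by (intro fa_linear_add fa_linear_efree fa_linear_ifree)

lemma FA_opv[simp]: "p \<in> FA \<Longrightarrow> opv G x p \<in> FA"
  by (simp add: opv_eq)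

lemma FA_opword[simp]: "p \<in> FA \<Longrightarrow> opword G w p \<in> FA"
  by (induction w) simp_all

lemma fa_linear_opword: "fa_linear (opword G w)"
proof (induction w)
  case Nil
  show ?case
    by (simp add: fa_linear_id)
next
  case (Cons x w)
  have "fa_linear (\<lambda>p. opv G x (opword G w p))"
    by (rule fa_linear_comp[OF fa_linear_opv Cons.IH]) auto
  then show ?case
    by (simp add: comp_def)
qed

lemma rhofree_word[simp]: "rhofree G (word w) p = opword G w p"
  by (simp add: rhofree_def)

lemma FA_rhofree[simp]: "t \<in> FA \<Longrightarrow> p \<in> FA \<Longrightarrow> rhofree G t p \<in> FA"
  by (simp add: rhofree_def FA_lin_ext)

lemma fa_linear_rhofree_left: "fa_linear (\<lambda>t. rhofree G t p)"
  by (simp add: rhofree_def fa_linear_lin_ext)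

lemma fa_linear_rhofree_right:
  assumes "t \<in> FA"
  shows "fa_linear (rhofree G t)"
  using assms
proof (induction rule: FA_induct)
  case zero
  then show ?case
    by (simp add: rhofree_def fa_linear_def fa_simps)
next
  case (add_word t w c)
  have "rhofree G (t + fsmult c (word w)) = (\<lambda>p. rhofree G t p + fsmult c (opword G w p))"
    using add_word.hyps by (simp add: rhofree_def lin_ext_add lin_ext_smult fun_eq_iff fa_simps)
  with add_word.IH show ?case
    by (simp add: fa_linear_add fa_linear_smult fa_linear_opword)
qed

lemma rhofree_efree:
  assumes "t \<in> FA" "p \<in> FA"
  shows "rhofree G (efree x t) p = opv G x (rhofree G t p)"
proof (rule fa_linear_eqI[OF _ _ _ assms(1)])
  show "fa_linear (\<lambda>t. rhofree G (efree x t) p)"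
    by (rule fa_linear_comp[OF fa_linear_rhofree_left fa_linear_efree]) auto
  show "fa_linear (\<lambda>t. opv G x (rhofree G t p))"
    by (rule fa_linear_comp[OF fa_linear_opv fa_linear_rhofree_left]) (auto simp: assms(2))
qed simp

section \<open>The ideal \<open>I(Q)\<close>\<close>

lemma cl_ideal_zero[simp]: "0 \<in> cl_ideal scale Q"
  using cl_ideal.zero[of scale Q] by simp

lemma cl_ideal_add[simp]:
  "p \<in> cl_ideal scale Q \<Longrightarrow> q \<in> cl_ideal scale Q \<Longrightarrow> p + q \<in> cl_ideal scale Q"
  using cl_ideal.add[of p scale Q q] by (simp add: fadd_eq_plus)

lemma cl_ideal_smult[simp]: "p \<in> cl_ideal scale Q \<Longrightarrow> fsmult c p \<in> cl_ideal scale Q"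
  by (rule cl_ideal.smult)

lemma cl_ideal_uminus[simp]: "p \<in> cl_ideal scale Q \<Longrightarrow> - p \<in> cl_ideal scale Q"
  using cl_ideal_smult[of p scale Q "-1"] by (simp add: fsmult_minus_one)

lemma cl_ideal_diff[simp]:
  "p \<in> cl_ideal scale Q \<Longrightarrow> q \<in> cl_ideal scale Q \<Longrightarrow> p - q \<in> cl_ideal scale Q"
  using cl_ideal_add[of p scale Q "- q"] by simp

lemma cl_gens_cases:
  assumes "r \<in> cl_gens scale Q"
  obtains x y where "fmul (fmul (word u) r) (word v)
                       = word (u @ (x + y) # v) - word (u @ x # v) - word (u @ y # v)"
    | c x where "fmul (fmul (word u) r) (word v)
                   = word (u @ scale c x # v) - fsmult c (word (u @ x # v))"
    | x where "fmul (fmul (word u) r) (word v)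
                 = word (u @ x # x # v) - fsmult (Q x) (word (u @ v))"
  using assms unfolding cl_gens_def
  by (auto simp: fsub_eq_minus iota_def fmul_diff_left fmul_diff_right fmul_smult_left
      fmul_smult_right fmul_word_word)

lemma cl_ideal_gen_additive:
  "word (u @ (x + y) # v) - word (u @ x # v) - word (u @ y # v) \<in> cl_ideal scale Q"
proof -
  have "fsub (fsub (iota (x + y)) (iota x)) (iota y) \<in> cl_gens scale Q"
    unfolding cl_gens_def by blast
  from cl_ideal.gen[OF this, of u v] show ?thesis
    by (simp add: fsub_eq_minus iota_def fmul_diff_left fmul_diff_right fmul_word_word)
qed

lemma cl_ideal_gen_homogeneous:
  "word (u @ scale c x # v) - fsmult c (word (u @ x # v)) \<in> cl_ideal scale Q"
proof -
  have "fsub (iota (scale c x)) (fsmult c (iota x)) \<in> cl_gens scale Q"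
    unfolding cl_gens_def by blast
  from cl_ideal.gen[OF this, of u v] show ?thesis
    by (simp add: fsub_eq_minus iota_def fmul_diff_left fmul_diff_right fmul_smult_left
        fmul_smult_right fmul_word_word)
qed

lemma cl_ideal_gen_square:
  "word (u @ x # x # v) - fsmult (Q x) (word (u @ v)) \<in> cl_ideal scale Q"
proof -
  have "fsub (fmul (iota x) (iota x)) (fsmult (Q x) (word [])) \<in> cl_gens scale Q"
    unfolding cl_gens_def by blast
  from cl_ideal.gen[OF this, of u v] show ?thesis
    by (simp add: fsub_eq_minus iota_def fmul_diff_left fmul_diff_right fmul_smult_left
        fmul_smult_right fmul_word_word)
qed

lemma cl_ideal_FA: "p \<in> cl_ideal scale Q \<Longrightarrow> p \<in> FA"
proof (induction rule: cl_ideal.induct)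
  case (gen r u v)
  then show ?case
    by (cases rule: cl_gens_cases[where u = u and v = v]) simp_all
qed (simp_all add: fadd_eq_plus)

lemma cl_ideal_efree: "p \<in> cl_ideal scale Q \<Longrightarrow> efree z p \<in> cl_ideal scale Q"
proof (induction rule: cl_ideal.induct)
  case (gen r u v)
  then show ?case
  proof (cases rule: cl_gens_cases[where u = u and v = v])
    case 1
    then show ?thesis
      using cl_ideal_gen_additive[of "z # u"] by simp
  next
    case 2
    then show ?thesis
      using cl_ideal_gen_homogeneous[of "z # u"] by simp
  next
    case 3
    then show ?thesis
      using cl_ideal_gen_square[of "z # u"] by simp
  qed
qed (simp_all add: fadd_eq_plus)

text \<open>Since \<open>I(Q)\<close> is closed under left multiplication by elements of \<open>V\<close> (case \<open>efree\<close>),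
  the generators need only be considered with empty left factor.\<close>

lemma cl_ideal_induct[consumes 1, case_names zero add smult additive homogeneous square efree]:
  assumes "r \<in> cl_ideal scale Q"
    and "P 0"
    and "\<And>p q. p \<in> cl_ideal scale Q \<Longrightarrow> q \<in> cl_ideal scale Q \<Longrightarrow> P p \<Longrightarrow> P q \<Longrightarrow> P (p + q)"
    and "\<And>c p. p \<in> cl_ideal scale Q \<Longrightarrow> P p \<Longrightarrow> P (fsmult c p)"
    and additive: "\<And>x y v. P (word ((x + y) # v) - word (x # v) - word (y # v))"
    and homogeneous: "\<And>c x v. P (word (scale c x # v) - fsmult c (word (x # v)))"
    and square: "\<And>x v. P (word (x # x # v) - fsmult (Q x) (word v))"
    and efree: "\<And>z p. p \<in> cl_ideal scale Q \<Longrightarrow> P p \<Longrightarrow> P (efree z p)"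
  shows "P r"
  using assms(1)
proof (induction rule: cl_ideal.induct)
  case (gen r u v)
  have additive_ctx: "P (word (u @ (x + y) # v) - word (u @ x # v) - word (u @ y # v))" for x y
    by (induction u) (use additive efree[OF cl_ideal_gen_additive] in simp_all)
  have homogeneous_ctx: "P (word (u @ scale c x # v) - fsmult c (word (u @ x # v)))" for c x
    by (induction u) (use homogeneous efree[OF cl_ideal_gen_homogeneous] in simp_all)
  have square_ctx: "P (word (u @ x # x # v) - fsmult (Q x) (word (u @ v)))" for x
    by (induction u) (use square efree[OF cl_ideal_gen_square] in simp_all)
  from gen show ?case
    by (cases rule: cl_gens_cases[where u = u and v = v])
       (simp_all add: additive_ctx homogeneous_ctx square_ctx)
qed (use assms(2-4) in \<open>simp_all add: fadd_eq_plus\<close>)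

lemma cl_ideal_lin_ext:
  assumes "p \<in> FA" "\<And>w. g w \<in> cl_ideal scale Q"
  shows "lin_ext g p \<in> cl_ideal scale Q"
  using assms(1) by (induction rule: FA_induct) (simp_all add: lin_ext_add lin_ext_smult assms(2))

lemma cl_ideal_fa_linearI:
  assumes "fa_linear T" "p \<in> FA" "\<And>w. T (word w) \<in> cl_ideal scale Q"
  shows "T p \<in> cl_ideal scale Q"
  using fa_linear_eq_lin_ext[OF assms(1,2)] cl_ideal_lin_ext[OF assms(2), of "\<lambda>w. T (word w)"]
    assms(3) by simp

lemma cl_ideal_efree_additive:
  "q \<in> FA \<Longrightarrow> efree (x + y) q - efree x q - efree y q \<in> cl_ideal scale Q"
  by (rule cl_ideal_fa_linearI[where T = "\<lambda>q. efree (x + y) q - efree x q - efree y q"])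
     (auto intro!: fa_linear_minus fa_linear_efree simp: cl_ideal_gen_additive[of "[]", simplified])

lemma cl_ideal_efree_homogeneous:
  "q \<in> FA \<Longrightarrow> efree (scale c x) q - fsmult c (efree x q) \<in> cl_ideal scale Q"
  by (rule cl_ideal_fa_linearI[where T = "\<lambda>q. efree (scale c x) q - fsmult c (efree x q)"])
     (auto intro!: fa_linear_minus fa_linear_efree fa_linear_smult
       simp: cl_ideal_gen_homogeneous[of "[]", simplified])

lemma cl_ideal_efree_square:
  assumes "q \<in> FA"
  shows "efree x (efree x q) - fsmult (Q x) q \<in> cl_ideal scale Q"
proof (rule cl_ideal_fa_linearI[OF _ assms])
  show "fa_linear (\<lambda>q. efree x (efree x q) - fsmult (Q x) q)"
    by (intro fa_linear_minus fa_linear_smult[OF fa_linear_id]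
        fa_linear_comp[OF fa_linear_efree fa_linear_efree]) auto
  show "efree x (efree x (word w)) - fsmult (Q x) (word w) \<in> cl_ideal scale Q" for w
    using cl_ideal_gen_square[of "[]" x w Q scale] by simp
qed

section \<open>Compatibility of the operators with \<open>I(Q)\<close>\<close>

definition linear_functional :: "('k::field \<Rightarrow> 'v::ab_group_add \<Rightarrow> 'v) \<Rightarrow> ('v \<Rightarrow> 'k) \<Rightarrow> bool" where
  "linear_functional scale f \<longleftrightarrow>
     (\<forall>y z. f (y + z) = f y + f z) \<and> (\<forall>c y. f (scale c y) = c * f y)"

lemma bilinear_form_linear_functional:
  "bilinear_form scale G \<Longrightarrow> linear_functional scale (G x)"
  by (simp add: bilinear_form_def linear_functional_def)

lemma bilinear_form_add:
  "bilinear_form scale F \<Longrightarrow> bilinear_form scale G \<Longrightarrow> bilinear_form scale (\<lambda>x y. F x y + G x y)"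
  by (simp add: bilinear_form_def algebra_simps)

lemma bilinear_form_left_fun:
  assumes "bilinear_form scale G"
  shows "G (x + y) = (\<lambda>z. G x z + G y z)" "G (scale c x) = (\<lambda>z. c * G x z)"
  using assms by (auto simp: bilinear_form_def)

lemma ifree_cl_ideal:
  assumes f: "linear_functional scale f" and p: "p \<in> cl_ideal scale Q"
  shows "ifree f p \<in> cl_ideal scale Q"
  using p
proof (induction rule: cl_ideal_induct)
  case (add p q)
  then show ?case
    by (simp add: ifree_add cl_ideal_FA)
next
  case (smult c p)
  then show ?case
    by (simp add: ifree_smult cl_ideal_FA)
next
  case (additive x y v)
  have "ifree f (word ((x + y) # v) - word (x # v) - word (y # v))
      = iw f ((x + y) # v) - iw f (x # v) - iw f (y # v)"
    by (simp only: ifree_diff FA_diff FA_word ifree_word)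
  also have "\<dots> = - (efree (x + y) (iw f v) - efree x (iw f v) - efree y (iw f v))"
    using f by (simp add: linear_functional_def fun_eq_iff fa_simps algebra_simps)
  finally show ?case
    using cl_ideal_uminus[OF cl_ideal_efree_additive[of "iw f v" x y scale Q]] by simp
next
  case (homogeneous c x v)
  have "ifree f (word (scale c x # v) - fsmult c (word (x # v)))
      = iw f (scale c x # v) - fsmult c (iw f (x # v))"
    by (simp only: ifree_diff ifree_smult FA_smult FA_word ifree_word)
  also have "\<dots> = - (efree (scale c x) (iw f v) - fsmult c (efree x (iw f v)))"
    using f by (simp add: linear_functional_def fun_eq_iff fa_simps algebra_simps)
  finally show ?case
    using cl_ideal_uminus[OF cl_ideal_efree_homogeneous[of "iw f v" scale c x Q]] by simp
next
  case (square x v)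
  have "ifree f (word (x # x # v) - fsmult (Q x) (word v))
      = efree x (efree x (iw f v)) - fsmult (Q x) (iw f v)"
    by (simp add: ifree_diff ifree_smult fun_eq_iff fa_simps algebra_simps)
  then show ?case
    using cl_ideal_efree_square[of "iw f v" x Q scale] by simp
next
  case (efree z p)
  then show ?case
    by (simp add: ifree_efree cl_ideal_FA cl_ideal_efree)
qed simp

lemma opv_cl_ideal:
  "linear_functional scale (G x) \<Longrightarrow> p \<in> cl_ideal scale Q \<Longrightarrow> opv G x p \<in> cl_ideal scale Q"
  by (simp add: opv_eq cl_ideal_efree ifree_cl_ideal)

lemma rhofree_cl_ideal:
  assumes "\<And>x. linear_functional scale (G x)" "t \<in> FA" "p \<in> cl_ideal scale Q"
  shows "rhofree G t p \<in> cl_ideal scale Q"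
proof -
  have "opword G w p \<in> cl_ideal scale Q" for w
    by (induction w) (simp_all add: assms(1,3) opv_cl_ideal)
  with cl_ideal_lin_ext[OF assms(2)] show ?thesis
    by (simp add: rhofree_def)
qed

text \<open>For alternating \<open>A\<close> the cross terms in \<open>(e\<^sub>x + i\<^sup>A\<^sub>x)\<^sup>2\<close> cancel and
  \<open>(i\<^sup>A\<^sub>x)\<^sup>2 = 0\<close>, so that \<open>\<rho>\<^sub>A(x)\<^sup>2 = e\<^sub>x\<^sup>2\<close>.\<close>

lemma rhofree_alternating_cl_ideal:
  assumes A: "alternating_form scale A"
    and r: "r \<in> cl_ideal scale Q"
    and p: "p \<in> FA"
  shows "rhofree A r p \<in> cl_ideal scale Q"
proof -
  have bil: "bilinear_form scale A" and alt: "\<And>x. A x x = 0"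
    using A by (auto simp: alternating_form_def)
  note rhofree_lin = fa_linear_diff[OF fa_linear_rhofree_left] fa_linearD[OF fa_linear_rhofree_left]
  have "\<forall>p\<in>FA. rhofree A r p \<in> cl_ideal scale Q"
    using r
  proof (induction rule: cl_ideal_induct)
    case zero
    then show ?case
      by (simp add: rhofree_def)
  next
    case (add r s)
    then show ?case
      by (simp add: rhofree_lin cl_ideal_FA)
  next
    case (smult c r)
    then show ?case
      by (simp add: rhofree_lin cl_ideal_FA)
  next
    case (additive x y v)
    have "rhofree A (word ((x + y) # v) - word (x # v) - word (y # v)) p
        = efree (x + y) (opword A v p) - efree x (opword A v p) - efree y (opword A v p)"
      if "p \<in> FA" for p
      by (simp add: rhofree_lin opv_eq bilinear_form_left_fun[OF bil] ifree_add_fun)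
    then show ?case
      by (simp add: cl_ideal_efree_additive)
  next
    case (homogeneous c x v)
    have "rhofree A (word (scale c x # v) - fsmult c (word (x # v))) p
        = efree (scale c x) (opword A v p) - fsmult c (efree x (opword A v p))"
      if "p \<in> FA" for p
      by (simp add: rhofree_lin opv_eq bilinear_form_left_fun[OF bil] ifree_smult_fun)
    then show ?case
      by (simp add: cl_ideal_efree_homogeneous)
  next
    case (square x v)
    have "rhofree A (word (x # x # v) - fsmult (Q x) (word v)) p
        = efree x (efree x (opword A v p)) - fsmult (Q x) (opword A v p)"
      if "p \<in> FA" for p
      using that by (simp add: rhofree_lin opv_eq ifree_add ifree_efree ifree_ifree alt fa_simps)
    then show ?case
      by (simp add: cl_ideal_efree_square)
  next
    case (efree z r)
    then show ?case
      using opv_cl_ideal[OF bilinear_form_linear_functional[OF bil]]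
      by (simp add: rhofree_efree cl_ideal_FA)
  qed
  with p show ?thesis
    by blast
qed

section \<open>Equivariance of \<open>\<lambda>\<^sub>A\<close>\<close>

lemma ifree_lambda_free:
  assumes "u \<in> FA"
  shows "ifree f (lambda_free A u) = lambda_free A (ifree f u)"
proof (rule fa_linear_eqI[OF _ _ _ assms])
  show "fa_linear (\<lambda>u. ifree f (lambda_free A u))"
    by (rule fa_linear_comp[OF fa_linear_ifree fa_linear_rhofree_left]) auto
  show "fa_linear (\<lambda>u. lambda_free A (ifree f u))"
    by (rule fa_linear_comp[OF fa_linear_rhofree_left fa_linear_ifree]) auto
  show "ifree f (lambda_free A (word w)) = lambda_free A (ifree f (word w))" for w
  proof (induction w)
    case (Cons x w)
    let ?L = "opword A w (word [])"
    have L: "?L \<in> FA"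
      by simp
    have "ifree f (opword A (x # w) (word [])) = ifree f (efree x ?L) + ifree f (ifree (A x) ?L)"
      using L by (simp add: opv_eq ifree_add)
    also have "\<dots> = fsmult (f x) ?L - efree x (ifree f ?L) - ifree (A x) (ifree f ?L)"
      using L by (simp add: ifree_efree ifree_anticommute[of _ f "A x"])
    also have "\<dots> = fsmult (f x) ?L - opv A x (lambda_free A (iw f w))"
      using Cons.IH by (simp add: opv_eq)
    also have "\<dots> = lambda_free A (iw f (x # w))"
      by (simp add: fa_linear_diff[OF fa_linear_rhofree_left] fa_linearD(2)[OF fa_linear_rhofree_left]
          rhofree_efree)
    finally show ?case
      by simp
  qed (simp add: rhofree_def)
qed

lemma opv_lambda_free:
  assumes "u \<in> FA"
  shows "opv (\<lambda>x y. F x y + A x y) x (lambda_free A u) = lambda_free A (opv F x u)"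
proof -
  have "opv (\<lambda>x y. F x y + A x y) x (lambda_free A u)
      = (efree x (lambda_free A u) + ifree (A x) (lambda_free A u)) + ifree (F x) (lambda_free A u)"
    by (simp add: opv_eq ifree_add_fun algebra_simps)
  also have "\<dots> = lambda_free A (efree x u) + lambda_free A (ifree (F x) u)"
    using assms by (simp add: rhofree_efree ifree_lambda_free opv_eq)
  also have "\<dots> = lambda_free A (opv F x u)"
    using assms by (simp add: opv_eq fa_linearD(1)[OF fa_linear_rhofree_left])
  finally show ?thesis .
qed

theorem rhofree_lambda_free:
  assumes t: "t \<in> FA" and u: "u \<in> FA"
  shows "rhofree (\<lambda>x y. F x y + A x y) t (lambda_free A u) = lambda_free A (rhofree F t u)"
proof (rule fa_linear_eqI[OF _ _ _ t])
  show "fa_linear (\<lambda>t. rhofree (\<lambda>x y. F x y + A x y) t (lambda_free A u))"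
    by (rule fa_linear_rhofree_left)
  show "fa_linear (\<lambda>t. lambda_free A (rhofree F t u))"
    by (rule fa_linear_comp[OF fa_linear_rhofree_left fa_linear_rhofree_left]) (auto simp: u)
  show "rhofree (\<lambda>x y. F x y + A x y) (word w) (lambda_free A u)
      = lambda_free A (rhofree F (word w) u)" for w
    by (induction w) (simp_all add: u opv_lambda_free)
qed

lemma lambda_free_zero:
  assumes "t \<in> FA"
  shows "lambda_free 0 t = t"
proof (rule fa_linear_eqI[OF fa_linear_rhofree_left fa_linear_id _ assms])
  show "lambda_free 0 (word w) = word w" for w
    by (induction w) (simp_all add: opv_eq zero_fun_apply)
qed

lemma lambda_free_neg_inverse:
  assumes "t \<in> FA"
  shows "lambda_free A (lambda_free (\<lambda>x y. - A x y) t) = t"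
proof -
  have "lambda_free A (lambda_free (\<lambda>x y. - A x y) t)
      = rhofree (\<lambda>x y. - A x y + A x y) t (lambda_free A (word []))"
    by (rule rhofree_lambda_free[OF assms FA_word, symmetric])
  also have "\<dots> = lambda_free 0 t"
    by (simp add: fa_simps)
  finally show ?thesis
    using lambda_free_zero[OF assms] by simp
qed

section \<open>Passing to classes\<close>

lemma cl_rel_iff: "(p, q) \<in> cl_rel scale Q \<longleftrightarrow> p \<in> FA \<and> q \<in> FA \<and> p - q \<in> cl_ideal scale Q"
  by (simp add: cl_rel_def fsub_eq_minus)

lemma equiv_cl_rel: "equiv FA (cl_rel scale Q)"
proof (rule equivI)
  show "cl_rel scale Q \<subseteq> FA \<times> FA"
    by (auto simp: cl_rel_iff)
  show "refl_on FA (cl_rel scale Q)"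
    by (rule refl_onI) (auto simp: cl_rel_iff)
  show "sym (cl_rel scale Q)"
    by (rule symI) (metis cl_rel_iff cl_ideal_uminus minus_diff_eq)
  show "trans (cl_rel scale Q)"
  proof (rule transI)
    fix p q r
    assume "(p, q) \<in> cl_rel scale Q" "(q, r) \<in> cl_rel scale Q"
    moreover have "p - r = (p - q) + (q - r)"
      by simp
    ultimately show "(p, r) \<in> cl_rel scale Q"
      by (metis cl_rel_iff cl_ideal_add)
  qed
qed

lemma Ext_eq_quotient: "Ext scale = FA // cl_rel scale 0"
  by (simp add: Ext_def Cl_def)

lemma ExtE:
  assumes "W \<in> Ext scale"
  obtains w where "w \<in> FA" "W = cls scale 0 w"
  using assms by (auto simp: Ext_eq_quotient cls_def elim: quotientE)

lemma cls_in_Ext: "w \<in> FA \<Longrightarrow> cls scale 0 w \<in> Ext scale"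
  by (simp add: Ext_eq_quotient cls_def quotientI)

lemma cls_eqI:
  "p \<in> FA \<Longrightarrow> q \<in> FA \<Longrightarrow> p - q \<in> cl_ideal scale Q \<Longrightarrow> cls scale Q p = cls scale Q q"
  unfolding cls_def by (rule equiv_class_eq[OF equiv_cl_rel]) (simp add: cl_rel_iff)

lemma some_in_quotient_FA:
  assumes "X \<in> FA // cl_rel scale Q"
  shows "(SOME p. p \<in> X) \<in> FA"
proof -
  have "X \<noteq> {}" "X \<subseteq> FA"
    using assms in_quotient_imp_non_empty in_quotient_imp_subset equiv_cl_rel by blast+
  then show ?thesis
    by (metis some_in_eq subsetD)
qed

lemma some_in_cls:
  assumes "p \<in> FA"
  shows "(SOME q. q \<in> cls scale Q p) \<in> FA \<and> p - (SOME q. q \<in> cls scale Q p) \<in> cl_ideal scale Q"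
proof -
  have "p \<in> cls scale Q p"
    unfolding cls_def by (rule equiv_class_self[OF equiv_cl_rel assms])
  then have "(SOME q. q \<in> cls scale Q p) \<in> cls scale Q p"
    by (rule someI[of "\<lambda>q. q \<in> cls scale Q p"])
  then show ?thesis
    unfolding cls_def Image_singleton_iff cl_rel_iff by blast
qed

lemma Lambda_bar_cls:
  assumes G: "\<And>x. linear_functional scale (G x)"
    and a: "a \<in> FA // cl_rel scale Q"
    and w: "w \<in> FA"
  shows "Lambda_bar scale G a (cls scale 0 w) = cls scale 0 (rhofree G (SOME t. t \<in> a) w)"
proof -
  define t where "t = (SOME t. t \<in> a)"
  define w' where "w' = (SOME p. p \<in> cls scale 0 w)"
  have t: "t \<in> FA"
    unfolding t_def using a by (rule some_in_quotient_FA)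
  have w': "w' \<in> FA" "w - w' \<in> cl_ideal scale 0"
    unfolding w'_def using some_in_cls[OF w] by auto
  have "rhofree G t w - rhofree G t w' = rhofree G t (w - w')"
    using fa_linear_diff[OF fa_linear_rhofree_right[OF t] w w'(1)] by simp
  also have "\<dots> \<in> cl_ideal scale 0"
    by (rule rhofree_cl_ideal[OF G t w'(2)])
  finally have "cls scale 0 (rhofree G t w) = cls scale 0 (rhofree G t w')"
    using t w w' by (intro cls_eqI) simp_all
  then show ?thesis
    by (simp add: Lambda_bar_def t_def w'_def)
qed

lemma lambda_bar_cls:
  assumes A: "alternating_form scale A" and u: "u \<in> FA"
  shows "lambda_bar scale A (cls scale 0 u) = cls scale 0 (lambda_free A u)"
proof -
  define u' where "u' = (SOME t. t \<in> cls scale 0 u)"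
  have u': "u' \<in> FA" "u - u' \<in> cl_ideal scale 0"
    unfolding u'_def using some_in_cls[OF u] by auto
  have A_lin: "linear_functional scale (A x)" for x
    using A by (simp add: alternating_form_def bilinear_form_linear_functional)
  have "lambda_bar scale A (cls scale 0 u)
      = Lambda_bar scale A (cls scale 0 u) (cls scale 0 (word []))"
    by (simp add: lambda_bar_def)
  also have "\<dots> = cls scale 0 (lambda_free A u')"
    unfolding u'_def
    by (rule Lambda_bar_cls[OF A_lin _ FA_word, where Q = 0])
       (use cls_in_Ext[OF u] in \<open>simp add: Ext_eq_quotient\<close>)
  also have "\<dots> = cls scale 0 (lambda_free A u)"
  proof (rule cls_eqI)
    have "lambda_free A u - lambda_free A u' = lambda_free A (u - u')"
      using fa_linear_diff[OF fa_linear_rhofree_left u u'(1)] by simp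
    then show "lambda_free A u' - lambda_free A u \<in> cl_ideal scale 0"
      by (metis cl_ideal_uminus minus_diff_eq rhofree_alternating_cl_ideal[OF A u'(2) FA_word])
  qed (simp_all add: u u')
  finally show ?thesis .
qed

lemma lambda_bar_surj:
  assumes A: "alternating_form scale A" and W: "W \<in> Ext scale"
  shows "W \<in> lambda_bar scale A ` Ext scale"
proof -
  obtain w where w: "w \<in> FA" "W = cls scale 0 w"
    using W by (rule ExtE)
  let ?u = "lambda_free (\<lambda>x y. - A x y) w"
  have "lambda_bar scale A (cls scale 0 ?u) = W"
    using w by (simp add: lambda_bar_cls[OF A] lambda_free_neg_inverse)
  moreover have "cls scale 0 ?u \<in> Ext scale"
    using w by (simp add: cls_in_Ext)
  ultimately show ?thesis
    by blast
qed

theorem mainTheorem13: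
  fixes scale :: "'k::field \<Rightarrow> 'v::ab_group_add \<Rightarrow> 'v"
    and F A :: "'v \<Rightarrow> 'v \<Rightarrow> 'k"
  assumes "vector_space scale"
    and "bilinear_form scale F"
    and "alternating_form scale A"
  shows "\<forall>a \<in> Cl scale (\<lambda>x. F x x). \<forall>W \<in> Ext scale.
           Lambda_bar scale (\<lambda>x y. F x y + A x y) a W
             = lambda_bar scale A
                 (Lambda_bar scale F a (inv_into (Ext scale) (lambda_bar scale A) W))"
proof (intro ballI)
  fix a W
  assume a: "a \<in> Cl scale (\<lambda>x. F x x)" and W: "W \<in> Ext scale"
  define t where "t = (SOME t. t \<in> a)"
  define U where "U = inv_into (Ext scale) (lambda_bar scale A) W"
  have a_quot: "a \<in> FA // cl_rel scale (\<lambda>x. F x x)"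
    using a by (simp add: Cl_def)
  then have t: "t \<in> FA"
    unfolding t_def by (rule some_in_quotient_FA)
  have U: "U \<in> Ext scale" "lambda_bar scale A U = W"
    unfolding U_def using lambda_bar_surj[OF assms(3) W] by (rule inv_into_into, rule f_inv_into_f)
  obtain u where u: "u \<in> FA" "U = cls scale 0 u"
    using U(1) by (rule ExtE)
  have sum_bilinear: "bilinear_form scale (\<lambda>x y. F x y + A x y)"
    using assms(2,3) by (simp add: alternating_form_def bilinear_form_add)
  have "Lambda_bar scale (\<lambda>x y. F x y + A x y) a W
      = cls scale 0 (rhofree (\<lambda>x y. F x y + A x y) t (lambda_free A u))"
    using U(2)[symmetric] u unfolding t_def
    by (simp add: lambda_bar_cls[OF assms(3)]
        Lambda_bar_cls[OF bilinear_form_linear_functional[OF sum_bilinear] a_quot])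
  also have "\<dots> = lambda_bar scale A (cls scale 0 (rhofree F t u))"
    using t u by (simp add: rhofree_lambda_free lambda_bar_cls[OF assms(3)])
  also have "\<dots> = lambda_bar scale A (Lambda_bar scale F a U)"
    using u unfolding t_def
    by (simp add: Lambda_bar_cls[OF bilinear_form_linear_functional[OF assms(2)] a_quot])
  finally show "Lambda_bar scale (\<lambda>x y. F x y + A x y) a W
      = lambda_bar scale A (Lambda_bar scale F a U)" .
qed

end
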